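(* The parent relation of the Explicit Tree $\mathbf T$ is well defined and $\mathbf T$ is a directed spanning tree of $\mathbf G$ rooted at $\mathcal R$ (for every $\mathcal U\neq\mathcal R$, $(parent(\mathcal U),\mathcal U)$ is an arc of $\mathbf G$, and the parent relation has no cycles).
   Context: Let $k\ge 2$, $\Sigma=\{0,\dots,k-1\}$ with arithmetic modulo $k$, $n\ge 1$, $s=s[0]\cdots s[n-1]\in\Sigma^n$. For an integer $j$, $ICR_j(s)=s[1]\cdots s[n-1](s[0]+j)$. Let $\mathbf N$ be the set of cycles (orbits) of the permutation $ICR_1$ of $\Sigma^n$. Let $\mathbf G$ be the directed graph on $\mathbf N$ with an arc $(\mathcal U,\mathcal V)$ iff some $s\in\mathcal U$ has $ICR_0(s)\in\mathcal V$. The difference array $\Delta(s)\in\Sigma^n$ is $\Delta(s)[i]=s[i-1]-s[i]$ for $0<i<n$ and $\Delta(s)[0]=s[n-1]-s[0]-1$ (mod $k$). Two strings $s,t$ lie in the same cycle iff $\Delta(s)$ and $\Delta(t)$ are cyclic rotations of each other; for a cycle $\mathcal U$, $\Delta(\mathcal U)$ denotes the lexicographically minimal rotation of $\Delta(s)$ for any $s\in\mathcal U$ (lexicographic order using $0<1<\dots<k-1$). Explicit Tree $\mathbf T$: the root $\mathcal R$ is the cycle of $0^n$; for $\mathcal U\in\mathbf N\setminus\{\mathcal R\}$, let $i$ be the least index with $\Delta(\mathcal U)[i]\ne0$, let $A$ be obtained from $\Delta(\mathcal U)$ by decrementing entry $i$ and incrementing entry $i+1$ (mod $k$), and let $parent(\mathcal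 U)$ be the unique cycle $\mathcal V$ with $\Delta(\mathcal V)$ equal to $A$ up to rotation. *)

theory Defs
  imports Main
begin

definition strs :: "nat \<Rightarrow> nat \<Rightarrow> nat list set" where
  "strs k n = {s. length s = n \<and> set s \<subseteq> {..<k}}"

definition icr :: "nat \<Rightarrow> nat \<Rightarrow> nat list \<Rightarrow> nat list" where
  "icr k j s = tl s @ [(hd s + j) mod k]"

definition cyc :: "nat \<Rightarrow> nat list \<Rightarrow> nat list set" where
  "cyc k s = {t. \<exists>m. t = (icr k 1 ^^ m) s}"

definition cycles :: "nat \<Rightarrow> nat \<Rightarrow> nat list set set" where
  "cycles k n = cyc k ` strs k n"

definition G_arc :: "nat \<Rightarrow> nat list set \<Rightarrow> nat list set \<Rightarrow> bool" where
  "G_arc k U V \<longleftrightarrow> (\<exists>s\<in>U. icr k 0 s \<in> V)"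

definition delta :: "nat \<Rightarrow> nat list \<Rightarrow> nat list" where
  "delta k s = map (\<lambda>i. if i = 0
        then nat ((int (s ! (length s - 1)) - int (s ! 0) - 1) mod int k)
        else nat ((int (s ! (i - 1)) - int (s ! i)) mod int k)) [0..<length s]"

definition lexmin_rot :: "nat list \<Rightarrow> nat list" where
  "lexmin_rot xs = (THE r. (\<exists>m. r = rotate m xs) \<and>
      (\<forall>m. r = rotate m xs \<or> (r, rotate m xs) \<in> lexord {(a, b). a < b}))"

definition deltaC :: "nat \<Rightarrow> nat list set \<Rightarrow> nat list" where
  "deltaC k U = lexmin_rot (delta k (SOME s. s \<in> U))"

definition root :: "nat \<Rightarrow> nat \<Rightarrow> nat list set" where
  "root k n = cyc k (replicate n 0)"

text \<open>The array A obtained from Delta(U): decrement the first nonzero entry i,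
  increment entry i+1 (index taken mod n; for U different from the root one has i+1 < n).\<close>
definition parent_array :: "nat \<Rightarrow> nat list \<Rightarrow> nat list" where
  "parent_array k D = (let n = length D; i = (LEAST i. i < n \<and> D ! i \<noteq> 0);
       j = (i + 1) mod n;
       D1 = D[i := (D ! i + k - 1) mod k]
     in D1[j := (D1 ! j + 1) mod k])"

definition is_parent :: "nat \<Rightarrow> nat \<Rightarrow> nat list set \<Rightarrow> nat list set \<Rightarrow> bool" where
  "is_parent k n U V \<longleftrightarrow> V \<in> cycles k n \<and>
      (\<exists>m. deltaC k V = rotate m (parent_array k (deltaC k U)))"

definition parent :: "nat \<Rightarrow> nat \<Rightarrow> nat list set \<Rightarrow> nat list set" where
  "parent k n U = (THE V. is_parent k n U V)"

end

(*
  ICR_1 rotates the difference array by one place, and two strings with equal difference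
  arrays differ by a constant shift, which is itself a power of ICR_1. Hence a cycle is
  determined by its difference array up to rotation. For a cycle U other than the root let
  D = Delta(U) and let i be its first nonzero entry; i + 1 < n, since otherwise U would be the
  root. The member u of U whose difference array is D rotated to start at entry i + 1 has the
  ICR_0-preimage s = last u # butlast u, whose difference array is a rotation of the parent
  array A. So the cycle of s is the unique parent of U and an arc of G leads from it to U.
  As A is lexicographically smaller than D, Delta strictly decreases along parent steps, and
  iterating the parent map reaches the root.
*)

theory Submission
  imports Defs "HOL-Library.List_Lexorder"
begin

lemma strs_nth_less: "s \<in> strs k n \<Longrightarrow> j < n \<Longrightarrow> s ! j < k"
  by (auto simp: strs_def dest!: nth_mem)

lemma icr_in_strs: "s \<in> strs k n \<Longrightarrow> 0 < n \<Longrightarrow> 0 < k \<Longrightarrow> icr k j s \<in> strs k n"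
  by (cases s) (auto simp: strs_def icr_def)

lemma funpow_icr_in_strs: "s \<in> strs k n \<Longrightarrow> 0 < n \<Longrightarrow> 0 < k \<Longrightarrow> (icr k j ^^ m) s \<in> strs k n"
  by (induction m) (auto intro: icr_in_strs)

lemma length_delta [simp]: "length (delta k s) = length s"
  by (simp add: delta_def)

lemma nth_delta: "j < length s \<Longrightarrow> delta k s ! j = (if j = 0
        then nat ((int (s ! (length s - 1)) - int (s ! 0) - 1) mod int k)
        else nat ((int (s ! (j - 1)) - int (s ! j)) mod int k))"
  by (simp add: delta_def del: upt_Suc)

lemma delta_less: "0 < k \<Longrightarrow> x \<in> set (delta k s) \<Longrightarrow> x < k"
  by (auto simp: delta_def nat_less_iff)

lemma nth_icr: "j < length s \<Longrightarrow>
    icr k i s ! j = (if j + 1 < length s then s ! (j + 1) else (s ! 0 + i) mod k)"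
  by (cases s) (auto simp: icr_def nth_append hd_conv_nth)

lemma delta_icr:
  assumes "s \<noteq> []"
  shows "delta k (icr k 1 s) = rotate 1 (delta k s)"
proof -
  let ?n = "length s"
  define t where "t = icr k 1 s"
  have len: "length t = ?n" using assms by (simp add: t_def icr_def)
  have t_nth: "j + 1 < ?n \<Longrightarrow> t ! j = s ! (j + 1)" for j
    by (simp add: t_def nth_icr)
  have t_last: "int (t ! (?n - 1)) = (int (s ! 0) + 1) mod int k"
    using assms by (simp add: t_def nth_icr zmod_int add.commute)
  have "delta k t ! j = delta k s ! (Suc j mod ?n)" if j: "j < ?n" for j
  proof -
    consider "?n = 1" | "j = 0" "1 < ?n" | "0 < j" "j + 1 < ?n" | "0 < j" "j + 1 = ?n"
      using j by linarith
    then show ?thesis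
    proof cases
      case 1
      then show ?thesis using assms j len by (simp add: nth_delta)
    next
      case 2
      then have "delta k t ! j = nat (((int (s ! 0) + 1) mod int k - (int (s ! 1) + 1)) mod int k)"
        using assms len t_last t_nth[of 0] by (simp add: nth_delta diff_diff_eq)
      also have "\<dots> = delta k s ! 1"
        using 2 by (simp only: mod_diff_left_eq) (simp add: nth_delta)
      finally show ?thesis using 2 by simp
    next
      case 3
      moreover have "t ! (j - 1) = s ! j" "t ! j = s ! (j + 1)"
        using 3 t_nth[of "j - 1"] t_nth[of j] by simp_all
      ultimately show ?thesis using assms len by (simp add: nth_delta)
    next
      case 4
      have "delta k t ! j = nat ((int (s ! j) - (int (s ! 0) + 1) mod int k) mod int k)"
        using 4 assms len t_last t_nth[of "j - 1"] by (simp add: nth_delta flip: 4(2))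
      also have "\<dots> = delta k s ! 0"
        using 4 by (simp only: mod_diff_right_eq) (simp add: nth_delta diff_diff_eq flip: 4(2))
      finally show ?thesis using 4 by simp
    qed
  qed
  then show ?thesis
    unfolding t_def[symmetric] by (intro nth_equalityI) (simp_all add: len nth_rotate1)
qed

lemma length_funpow_icr: "s \<noteq> [] \<Longrightarrow> length ((icr k j ^^ m) s) = length s"
  by (induction m) (simp_all add: icr_def)

lemma delta_funpow_icr:
  "s \<noteq> [] \<Longrightarrow> delta k ((icr k 1 ^^ m) s) = rotate m (delta k s)"
proof (induction m)
  case (Suc m)
  have "(icr k 1 ^^ m) s \<noteq> []"
    using Suc.prems by (metis length_funpow_icr length_0_conv)
  from delta_icr[OF this, of k] show ?case using Suc by simp
qed simp

lemma funpow_icr_conv_drop_take: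
  "m \<le> length s \<Longrightarrow> (icr k 1 ^^ m) s = drop m s @ map (\<lambda>x. (x + 1) mod k) (take m s)"
proof (induction m)
  case (Suc m)
  then show ?case
    by (simp add: icr_def take_Suc_conv_app_nth hd_drop_conv_nth drop_Suc tl_drop)
qed simp

lemma funpow_icr_mult_length:
  assumes "set s \<subseteq> {..<k}"
  shows "(icr k 1 ^^ (length s * c)) s = map (\<lambda>x. (x + c) mod k) s"
proof (induction c)
  case 0
  show ?case using assms by (auto intro!: map_idI[symmetric])
next
  case (Suc c)
  have "(icr k 1 ^^ (length s * Suc c)) s = (icr k 1 ^^ length s) (map (\<lambda>x. (x + c) mod k) s)"
    using Suc by (simp add: funpow_add)
  also have "\<dots> = map (\<lambda>x. (x + Suc c) mod k) s"
    using funpow_icr_conv_drop_take[of "length s" "map (\<lambda>x. (x + c) mod k) s" k]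
    by (simp add: mod_simps)
  finally show ?case .
qed

lemma delta_eq_imp_diff_const:
  assumes s: "s \<in> strs k n" and t: "t \<in> strs k n" and "0 < k"
    and d: "delta k s = delta k t" and "j < n"
  shows "(int (t ! j) - int (s ! j)) mod int k = (int (t ! 0) - int (s ! 0)) mod int k"
  using \<open>j < n\<close>
proof (induction j)
  case (Suc j)
  have len: "length s = n" "length t = n" using s t by (simp_all add: strs_def)
  have "nat ((int (s ! j) - int (s ! Suc j)) mod int k) = nat ((int (t ! j) - int (t ! Suc j)) mod int k)"
    using d Suc.prems len nth_delta[of "Suc j" s k] nth_delta[of "Suc j" t k] by simp
  then have "(int (s ! j) - int (s ! Suc j)) mod int k = (int (t ! j) - int (t ! Suc j)) mod int k"
    using \<open>0 < k\<close> by (subst (asm) eq_nat_nat_iff) auto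
  moreover have "(int (t ! Suc j) - int (s ! Suc j)) - (int (t ! j) - int (s ! j))
      = (int (s ! j) - int (s ! Suc j)) - (int (t ! j) - int (t ! Suc j))"
    by simp
  ultimately have "(int (t ! Suc j) - int (s ! Suc j)) mod int k = (int (t ! j) - int (s ! j)) mod int k"
    unfolding mod_eq_dvd_iff by metis
  with Suc show ?case by simp
qed simp

lemma delta_eq_imp_shift:
  assumes s: "s \<in> strs k n" and t: "t \<in> strs k n" and "0 < k"
    and d: "delta k s = delta k t"
  shows "\<exists>c. t = map (\<lambda>x. (x + c) mod k) s"
proof (cases "n = 0")
  case True
  then show ?thesis using s t by (simp add: strs_def)
next
  case False
  define c where "c = t ! 0 + k - s ! 0" \<comment> \<open>the summand k prevents truncated subtraction\<close>
  have "s ! 0 < k" using False s by (simp add: strs_nth_less)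
  then have c: "int c = int (t ! 0) - int (s ! 0) + int k" by (simp add: c_def)
  have "t ! j = (s ! j + c) mod k" if "j < n" for j
  proof -
    have "int ((s ! j + c) mod k) = (int (s ! j) + (int (t ! 0) - int (s ! 0))) mod int k"
      using c by (simp add: zmod_int flip: add.assoc)
    also have "\<dots> = (int (s ! j) + (int (t ! j) - int (s ! j))) mod int k"
      using delta_eq_imp_diff_const[OF assms that] by (metis mod_add_right_eq)
    also have "\<dots> = int (t ! j)"
      using strs_nth_less[OF t that] by simp
    finally show ?thesis by simp
  qed
  then have "t = map (\<lambda>x. (x + c) mod k) s"
    using s t by (intro nth_equalityI) (simp_all add: strs_def)
  then show ?thesis ..
qed

lemma rotate_inverse: "\<exists>m'. xs = rotate m' (rotate m xs)"
proof -
  have "rotate ((length xs - 1) * m) (rotate m xs) = rotate (length xs * m) xs"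
    by (cases "length xs") (simp_all add: rotate_rotate add.commute)
  then show ?thesis by (metis rotate_id mod_mult_self1_is_0)
qed

lemma nth_rotate_length_minus_one:
  assumes "j < length xs"
  shows "rotate (length xs - 1) xs ! j = xs ! (if j = 0 then length xs - 1 else j - 1)"
proof -
  have "(length xs - 1 + j) mod length xs = (if j = 0 then length xs - 1 else j - 1)"
  proof (cases j)
    case (Suc m)
    then have "length xs - 1 + j = m + length xs" using assms by simp
    then show ?thesis using Suc assms by simp
  qed (use assms in simp)
  then show ?thesis using assms by (simp add: nth_rotate)
qed

lemma mem_cyc_self: "s \<in> cyc k s"
  unfolding cyc_def by (metis (mono_tags) funpow_0 mem_Collect_eq)

lemma mem_cyc_iff:
  assumes s: "s \<in> strs k n" and t: "t \<in> strs k n" and "0 < k" "0 < n"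
  shows "t \<in> cyc k s \<longleftrightarrow> (\<exists>m. delta k t = rotate m (delta k s))"
proof
  have "s \<noteq> []" using s \<open>0 < n\<close> by (auto simp: strs_def)
  note delta_s = delta_funpow_icr[OF this]
  show "t \<in> cyc k s \<Longrightarrow> \<exists>m. delta k t = rotate m (delta k s)"
    using delta_s by (auto simp: cyc_def)
  assume "\<exists>m. delta k t = rotate m (delta k s)"
  then obtain m where m: "delta k t = rotate m (delta k s)" ..
  define s' where "s' = (icr k 1 ^^ m) s"
  have s': "s' \<in> strs k n"
    using funpow_icr_in_strs[OF s] assms by (simp add: s'_def)
  have "delta k s' = delta k t" using delta_s m by (simp add: s'_def)
  then obtain c where "t = map (\<lambda>x. (x + c) mod k) s'"
    using delta_eq_imp_shift[OF s' t \<open>0 < k\<close>] by blast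
  also have "\<dots> = (icr k 1 ^^ (n * c)) s'"
    using funpow_icr_mult_length[of s' k c] s' by (simp add: strs_def)
  finally have "t = (icr k 1 ^^ (n * c + m)) s" by (simp add: s'_def funpow_add)
  then show "t \<in> cyc k s" unfolding cyc_def by blast
qed

lemma cyc_eq_if_delta_rotate:
  assumes s: "s \<in> strs k n" and t: "t \<in> strs k n" and "0 < k" "0 < n"
    and "delta k t = rotate m (delta k s)"
  shows "cyc k t = cyc k s"
proof -
  have trans: "cyc k u \<subseteq> cyc k v" if "u \<in> cyc k v" for u v
    using that by (auto simp: cyc_def) (metis comp_apply funpow_add)
  obtain m' where "delta k s = rotate m' (delta k t)"
    using rotate_inverse assms(5) by metis
  then show ?thesis
    using trans mem_cyc_iff[OF s t] mem_cyc_iff[OF t s] assms by (metis subset_antisym)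
qed

lemma finite_range_rotate: "finite (range (\<lambda>m. rotate m xs))"
proof (rule finite_subset)
  show "range (\<lambda>m. rotate m xs) \<subseteq> {ys. set ys \<subseteq> set xs \<and> length ys = length xs}" by auto
qed (rule finite_lists_length_eq[OF finite_set])

lemma lexmin_rot_eq_Min: "lexmin_rot xs = Min (range (\<lambda>m. rotate m xs))"
  unfolding lexmin_rot_def
proof (rule the_equality)
  let ?R = "range (\<lambda>m. rotate m xs)"
  have "Min ?R \<in> ?R" by (rule Min_in[OF finite_range_rotate]) simp
  moreover have "\<forall>y\<in>?R. Min ?R \<le> y" using Min_le[OF finite_range_rotate] by blast
  ultimately show "(\<exists>m. Min ?R = rotate m xs) \<and>
      (\<forall>m. Min ?R = rotate m xs \<or> (Min ?R, rotate m xs) \<in> lexord {(a, b). a < b})"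
    by (auto simp: list_le_def list_less_def)
  fix r assume r: "(\<exists>m. r = rotate m xs) \<and>
      (\<forall>m. r = rotate m xs \<or> (r, rotate m xs) \<in> lexord {(a, b). a < b})"
  then have "r \<in> ?R" "\<forall>y\<in>?R. r \<le> y"
    by (auto simp: list_le_def list_less_def)
  then show "r = Min ?R"
    using \<open>Min ?R \<in> ?R\<close> finite_range_rotate by (metis Min_le antisym)
qed

lemma lexmin_rot_rotate: "lexmin_rot (rotate m xs) = lexmin_rot xs"
proof -
  obtain m' where m': "xs = rotate m' (rotate m xs)" using rotate_inverse by blast
  have "range (\<lambda>p. rotate p (rotate m xs)) = range (\<lambda>p. rotate p xs)"
  proof (intro equalityI subsetI)
    fix ys assume "ys \<in> range (\<lambda>p. rotate p (rotate m xs))"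
    then show "ys \<in> range (\<lambda>p. rotate p xs)" by (auto simp: rotate_rotate)
  next
    fix ys assume "ys \<in> range (\<lambda>p. rotate p xs)"
    then obtain p where "ys = rotate p xs" by blast
    then have "ys = rotate (p + m') (rotate m xs)" by (metis m' rotate_rotate)
    then show "ys \<in> range (\<lambda>p. rotate p (rotate m xs))" by blast
  qed
  then show ?thesis by (simp add: lexmin_rot_eq_Min)
qed

lemma lexmin_rot_rotation: "\<exists>m. lexmin_rot xs = rotate m xs"
  using Min_in[OF finite_range_rotate, of xs] by (auto simp: lexmin_rot_eq_Min)

lemma lexmin_rot_le: "lexmin_rot xs \<le> rotate m xs"
  by (simp add: lexmin_rot_eq_Min Min_le[OF finite_range_rotate])

lemma deltaC_cyc:
  assumes "s \<in> strs k n" "0 < k" "0 < n"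
  shows "deltaC k (cyc k s) = lexmin_rot (delta k s)"
proof -
  have "(SOME t. t \<in> cyc k s) \<in> cyc k s" using mem_cyc_self by (rule someI)
  moreover have "cyc k s \<subseteq> strs k n"
    using funpow_icr_in_strs assms by (auto simp: cyc_def)
  ultimately obtain m where "delta k (SOME t. t \<in> cyc k s) = rotate m (delta k s)"
    using mem_cyc_iff assms by blast
  then show ?thesis by (simp add: deltaC_def lexmin_rot_rotate)
qed

lemma replicate_if_delta_zero:
  assumes u: "set u \<subseteq> {..<k}" and zero: "\<forall>j. 0 < j \<and> j < length u \<longrightarrow> delta k u ! j = 0"
  shows "u = replicate (length u) (u ! 0)"
proof -
  have step: "u ! (j - 1) = u ! j" if j: "0 < j" "j < length u" for j
  proof -
    have "u ! (j - 1) \<in> set u" "u ! j \<in> set u" using j by (auto intro!: nth_mem)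
    then have lt: "u ! (j - 1) < k" "u ! j < k" using u by auto
    then have "0 < k" by simp
    have "nat ((int (u ! (j - 1)) - int (u ! j)) mod int k) = 0"
      using zero j nth_delta[of j u k] by simp
    moreover have "0 \<le> (int (u ! (j - 1)) - int (u ! j)) mod int k" using \<open>0 < k\<close> by simp
    ultimately have "(int (u ! (j - 1)) - int (u ! j)) mod int k = 0" by simp
    then have "int (u ! (j - 1)) mod int k = int (u ! j) mod int k"
      by (simp add: mod_eq_dvd_iff mod_eq_0_iff_dvd)
    then show ?thesis using lt by simp
  qed
  have const: "u ! j = u ! 0" if "j < length u" for j
    using that
  proof (induction j)
    case (Suc j)
    then show ?case using step[of "Suc j"] by simp
  qed simp
  show ?thesis
    using const by (metis length_replicate nth_equalityI nth_replicate)
qed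

lemma delta_replicate: "delta k (replicate n c) = delta k (replicate n 0)"
  by (rule nth_equalityI) (simp_all add: nth_delta)

lemma cyc_replicate_eq_root:
  assumes "c < k" "0 < n"
  shows "cyc k (replicate n c) = root k n"
  unfolding root_def
proof (rule cyc_eq_if_delta_rotate[where m = 0])
  show "delta k (replicate n c) = rotate 0 (delta k (replicate n 0))"
    using delta_replicate[of k n c] by simp
qed (use assms in \<open>auto simp: strs_def\<close>)

lemma cyc_eq_root_if_lexmin_rot_zero:
  assumes s: "s \<in> strs k n" and "0 < k" "0 < n"
    and zero: "\<forall>j < n - 1. lexmin_rot (delta k s) ! j = 0"
  shows "cyc k s = root k n"
proof -
  let ?D = "lexmin_rot (delta k s)"
  obtain p where p: "?D = rotate p (delta k s)" using lexmin_rot_rotation by blast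
  have len_s: "length s = n" using s by (simp add: strs_def)
  define u where "u = (icr k 1 ^^ (n - 1 + p)) s"
  have u: "u \<in> strs k n" unfolding u_def using funpow_icr_in_strs[OF s \<open>0 < n\<close> \<open>0 < k\<close>] .
  have delta_u: "delta k u = rotate (n - 1 + p) (delta k s)"
    unfolding u_def using delta_funpow_icr[of s k] len_s \<open>0 < n\<close> by auto
  have len_D: "length ?D = n" using p len_s by simp
  have "delta k u = rotate (length ?D - 1) ?D" using delta_u p len_D by (simp add: rotate_rotate)
  then have zero_u: "delta k u ! j = 0" if "0 < j" "j < n" for j
    using nth_rotate_length_minus_one[of j ?D] zero that len_D by simp
  have len_u: "length u = n" using u by (simp add: strs_def)
  have "u = replicate (length u) (u ! 0)"
    by (rule replicate_if_delta_zero) (use u zero_u len_u in \<open>auto simp: strs_def\<close>)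
  then have "cyc k u = cyc k (replicate n (u ! 0))" using len_u by metis
  also have "\<dots> = root k n"
    by (rule cyc_replicate_eq_root[OF strs_nth_less[OF u \<open>0 < n\<close>] \<open>0 < n\<close>])
  finally have "cyc k u = root k n" .
  moreover have "cyc k u = cyc k s"
    using cyc_eq_if_delta_rotate[OF s u \<open>0 < k\<close> \<open>0 < n\<close> delta_u] .
  ultimately show ?thesis by simp
qed

definition move_unit :: "nat \<Rightarrow> nat \<Rightarrow> nat list \<Rightarrow> nat list" where
  "move_unit k i D = D[i := (D ! i + k - 1) mod k, Suc i := (D ! Suc i + 1) mod k]"

lemma parent_array_eq_move_unit:
  assumes "i = (LEAST i. i < length D \<and> D ! i \<noteq> 0)" "Suc i < length D"
  shows "parent_array k D = move_unit k i D"
  using assms by (simp add: parent_array_def move_unit_def Let_def)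

lemma rotate_move_unit:
  assumes "Suc i < length D"
  shows "rotate i (move_unit k i D) = move_unit k 0 (rotate i D)"
  using assms
  by (simp add: move_unit_def rotate_drop_take drop_update_swap list_update_append1 nth_append)

lemma move_unit_less:
  assumes "Suc i < length D" "0 < D ! i" "D ! i \<le> k"
  shows "move_unit k i D < D"
proof -
  have "take i (move_unit k i D) = take i D" by (simp add: move_unit_def)
  moreover have "move_unit k i D ! i < D ! i"
  proof -
    obtain d where d: "D ! i = Suc d" using assms(2) by (cases "D ! i") auto
    then have "move_unit k i D ! i = d mod k" using assms(1) by (simp add: move_unit_def)
    also have "\<dots> \<le> d" by (rule mod_less_eq_dividend)
    finally show ?thesis using d by simp
  qed
  ultimately have "(move_unit k i D, D) \<in> lexord {(a, b). a < b}"
    using assms(1) unfolding lexord_take_index_conv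
    by (intro disjI2 exI[of _ i]) (simp add: move_unit_def)
  then show ?thesis by (simp add: list_less_def)
qed

lemma parent_array_move_unit:
  assumes "\<forall>y\<in>set D. y < k" "x < length D - 1" "D ! x \<noteq> 0"
  obtains i where "Suc i < length D" "parent_array k D = move_unit k i D" "parent_array k D < D"
proof -
  define i where "i = (LEAST i. i < length D \<and> D ! i \<noteq> 0)"
  have i: "i < length D" "D ! i \<noteq> 0"
    using LeastI[of "\<lambda>i. i < length D \<and> D ! i \<noteq> 0" x] assms by (simp_all add: i_def)
  have "i \<le> x" unfolding i_def using assms by (intro Least_le) simp
  then have Suc_i: "Suc i < length D" using assms by simp
  have A: "parent_array k D = move_unit k i D"
    using parent_array_eq_move_unit[OF i_def Suc_i] .
  have "D ! i < k" using assms i by simp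
  then have "parent_array k D < D"
    unfolding A using move_unit_less[OF Suc_i] i by (simp add: less_imp_le)
  with Suc_i A show thesis by (rule that)
qed

lemma nat_mod_pred_eq_diff_one:
  assumes "0 < k"
  shows "(nat (x mod int k) + k - 1) mod k = nat ((x - 1) mod int k)"
proof -
  have "int ((nat (x mod int k) + k - 1) mod k) = (x mod int k + (int k - 1)) mod int k"
    using assms by (simp add: zmod_int of_nat_diff add_diff_eq)
  also have "\<dots> = (x - 1 + int k) mod int k"
    by (simp only: mod_add_left_eq) (simp add: algebra_simps)
  finally show ?thesis by simp
qed

lemma nat_mod_succ_diff_one:
  assumes "0 < k"
  shows "(nat ((x - 1) mod int k) + 1) mod k = nat (x mod int k)"
proof -
  have "int ((nat ((x - 1) mod int k) + 1) mod k) = ((x - 1) mod int k + 1) mod int k"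
    using assms by (simp add: zmod_int add.commute)
  also have "\<dots> = x mod int k" by (simp add: mod_simps)
  finally show ?thesis by simp
qed

lemma icr_zero_last_Cons_butlast: "u \<noteq> [] \<Longrightarrow> last u < k \<Longrightarrow> icr k 0 (last u # butlast u) = u"
  by (simp add: icr_def)

lemma nth_last_Cons_butlast:
  assumes "j < length xs"
  shows "(last xs # butlast xs) ! j = xs ! (if j = 0 then length xs - 1 else j - 1)"
  using assms by (cases j) (auto simp: last_conv_nth nth_butlast)

lemma delta_last_Cons_butlast:
  assumes "2 \<le> length u" "0 < k"
  shows "delta k (last u # butlast u) = move_unit k 0 (rotate (length u - 1) (delta k u))"
proof -
  let ?n = "length u" and ?R = "rotate (length u - 1) (delta k u)"
  define s where "s = last u # butlast u"
  have len: "length s = ?n" using assms by (simp add: s_def)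
  have "u \<noteq> []" using assms by auto
  have s0: "s ! 0 = u ! (?n - 1)"
    using nth_last_Cons_butlast[of 0 u] \<open>u \<noteq> []\<close> by (simp add: s_def)
  have sj: "s ! j = u ! (j - 1)" if "0 < j" "j < ?n" for j
    using nth_last_Cons_butlast[of j u] that by (simp add: s_def)
  have R: "?R ! j = delta k u ! (if j = 0 then ?n - 1 else j - 1)" if "j < ?n" for j
    using nth_rotate_length_minus_one[of j "delta k u"] that by simp
  have "delta k s ! j = move_unit k 0 ?R ! j" if j: "j < ?n" for j
  proof -
    consider "j = 0" | "j = 1" | "2 \<le> j" by linarith
    then show ?thesis
    proof cases
      case 1
      have "delta k s ! j = nat ((int (u ! (?n - 2)) - int (u ! (?n - 1)) - 1) mod int k)"
        using 1 assms \<open>u \<noteq> []\<close> len s0 sj[of "?n - 1"] by (simp add: nth_delta numeral_2_eq_2)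
      also have "\<dots> = (?R ! 0 + k - 1) mod k"
        using assms \<open>u \<noteq> []\<close> R[of 0] nat_mod_pred_eq_diff_one[OF \<open>0 < k\<close>]
        by (simp add: nth_delta numeral_2_eq_2)
      finally show ?thesis using 1 assms \<open>u \<noteq> []\<close> by (simp add: move_unit_def)
    next
      case 2
      have "delta k s ! j = nat ((int (u ! (?n - 1)) - int (u ! 0)) mod int k)"
        using 2 j \<open>u \<noteq> []\<close> len s0 sj[of 1] by (simp add: nth_delta)
      also have "\<dots> = (?R ! 1 + 1) mod k"
        using assms \<open>u \<noteq> []\<close> R[of 1] nat_mod_succ_diff_one[OF \<open>0 < k\<close>]
        by (simp add: nth_delta)
      finally show ?thesis using 2 assms \<open>u \<noteq> []\<close> by (simp add: move_unit_def)
    next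
      case 3
      then show ?thesis
        using j len sj[of j] sj[of "j - 1"] R[of j] by (simp add: nth_delta move_unit_def)
    qed
  qed
  then show ?thesis
    unfolding s_def[symmetric] by (intro nth_equalityI) (simp_all add: len move_unit_def)
qed

lemma parent_witness:
  assumes s0: "s0 \<in> strs k n" and "0 < k" "0 < n" and nonroot: "cyc k s0 \<noteq> root k n"
  defines "D \<equiv> lexmin_rot (delta k s0)"
  obtains s q where "s \<in> strs k n" "icr k 0 s \<in> cyc k s0"
    "delta k s = rotate q (parent_array k D)" "parent_array k D < D"
proof -
  obtain p where p: "D = rotate p (delta k s0)" unfolding D_def using lexmin_rot_rotation by blast
  have len_D: "length D = n" using s0 p by (simp add: strs_def)
  have D_less: "\<forall>y\<in>set D. y < k" using delta_less[OF \<open>0 < k\<close>] p by simp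
  obtain x where "x < n - 1" "D ! x \<noteq> 0"
    using cyc_eq_root_if_lexmin_rot_zero[OF s0 \<open>0 < k\<close> \<open>0 < n\<close>] nonroot D_def by blast
  then obtain i where Suc_i: "Suc i < length D" and A: "parent_array k D = move_unit k i D"
    and "parent_array k D < D"
    using parent_array_move_unit[of D k x] len_D D_less by blast
  define u where "u = (icr k 1 ^^ (Suc i + p)) s0"
  have u: "u \<in> strs k n" unfolding u_def using funpow_icr_in_strs[OF s0 \<open>0 < n\<close> \<open>0 < k\<close>] .
  have "s0 \<noteq> []" using s0 \<open>0 < n\<close> by (auto simp: strs_def)
  then have delta_u: "delta k u = rotate (Suc i) D"
    using delta_funpow_icr[of s0 k "Suc i + p"] p by (simp add: u_def rotate_rotate)
  have len_u: "length u = n" and "set u \<subseteq> {..<k}" using u by (simp_all add: strs_def)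
  then have "u \<noteq> []" using \<open>0 < n\<close> by auto
  then have "last u < k" using \<open>set u \<subseteq> {..<k}\<close> last_in_set by blast
  define s where "s = last u # butlast u"
  have "s \<in> strs k n"
    using len_u \<open>set u \<subseteq> {..<k}\<close> \<open>u \<noteq> []\<close> \<open>last u < k\<close>
    by (auto simp: s_def strs_def dest: in_set_butlastD)
  moreover have "icr k 0 s \<in> cyc k s0"
  proof -
    have "u \<in> cyc k s0" unfolding u_def cyc_def by blast
    then show ?thesis
      using icr_zero_last_Cons_butlast[OF \<open>u \<noteq> []\<close> \<open>last u < k\<close>] by (simp add: s_def)
  qed
  moreover have "delta k s = rotate i (parent_array k D)"
  proof -
    have "2 \<le> n" using Suc_i len_D by simp
    then have "delta k s = move_unit k 0 (rotate (n - 1) (rotate (Suc i) D))"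
      using delta_last_Cons_butlast[of u k] len_u delta_u \<open>0 < k\<close> by (simp add: s_def)
    also have "rotate (n - 1) (rotate (Suc i) D) = rotate (i + length D) D"
      using \<open>2 \<le> n\<close> len_D by (simp add: rotate_rotate add.commute del: rotate_Suc)
    also have "\<dots> = rotate i D" by (metis rotate_conv_mod mod_add_self2)
    finally show ?thesis using rotate_move_unit[OF Suc_i] A by simp
  qed
  ultimately show thesis using that \<open>parent_array k D < D\<close> by blast
qed

lemma length_deltaC:
  assumes "U \<in> cycles k n" "0 < k" "0 < n"
  shows "length (deltaC k U) = n"
proof -
  obtain s where s: "s \<in> strs k n" and U_eq: "U = cyc k s" using assms(1) by (auto simp: cycles_def)
  obtain m where "lexmin_rot (delta k s) = rotate m (delta k s)" using lexmin_rot_rotation by blast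
  then show ?thesis using deltaC_cyc[OF s] assms s U_eq by (simp add: strs_def)
qed

lemma parent_cycle:
  assumes U: "U \<in> cycles k n" and "U \<noteq> root k n" "0 < k" "0 < n"
  obtains s where "s \<in> strs k n" "icr k 0 s \<in> U" "is_parent k n U = (=) (cyc k s)"
    "deltaC k (cyc k s) < deltaC k U"
proof -
  obtain s0 where s0: "s0 \<in> strs k n" and U_eq: "U = cyc k s0" using U by (auto simp: cycles_def)
  let ?D = "deltaC k U" and ?A = "parent_array k (deltaC k U)"
  have D: "?D = lexmin_rot (delta k s0)" using deltaC_cyc[OF s0] assms U_eq by simp
  have "cyc k s0 \<noteq> root k n" using assms U_eq by simp
  then obtain s q where s: "s \<in> strs k n" "icr k 0 s \<in> cyc k s0"
    and q: "delta k s = rotate q (parent_array k (lexmin_rot (delta k s0)))"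
    and less: "parent_array k (lexmin_rot (delta k s0)) < lexmin_rot (delta k s0)"
    by (rule parent_witness[OF s0 \<open>0 < k\<close> \<open>0 < n\<close>])
  note s = s[folded U_eq] and q = q[folded D] and less = less[folded D]
  obtain q' where q': "?A = rotate q' (delta k s)"
    using rotate_inverse[of ?A q] unfolding q[symmetric] by blast
  have deltaC_s: "deltaC k (cyc k s) = lexmin_rot (delta k s)" using deltaC_cyc[OF s(1)] assms by simp
  have "is_parent k n U = (=) (cyc k s)"
  proof (intro ext iffI)
    fix V assume V: "cyc k s = V"
    obtain m where "lexmin_rot ?A = rotate m ?A" using lexmin_rot_rotation by blast
    then have "deltaC k V = rotate m ?A" using V deltaC_s q by (simp add: lexmin_rot_rotate)
    moreover have "V \<in> cycles k n" using s(1) by (simp add: cycles_def flip: V)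
    ultimately show "is_parent k n U V" by (auto simp: is_parent_def)
  next
    fix V assume "is_parent k n U V"
    then obtain s' m where s': "s' \<in> strs k n" "V = cyc k s'" and m: "deltaC k V = rotate m ?A"
      unfolding is_parent_def cycles_def by blast
    obtain c where "lexmin_rot (delta k s') = rotate c (delta k s')" using lexmin_rot_rotation by blast
    then have "rotate c (delta k s') = rotate m ?A"
      using m deltaC_cyc[OF s'(1) \<open>0 < k\<close> \<open>0 < n\<close>] s'(2) by simp
    moreover obtain c' where "delta k s' = rotate c' (rotate c (delta k s'))"
      using rotate_inverse by blast
    ultimately have "delta k s' = rotate c' (rotate m ?A)" by metis
    then have "delta k s' = rotate (c' + m + q') (delta k s)" using q' by (simp add: rotate_rotate add.assoc)
    then show "cyc k s = V" using cyc_eq_if_delta_rotate[OF s(1) s'(1)] assms s'(2) by simp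
  qed
  moreover have "deltaC k (cyc k s) < ?D"
    using lexmin_rot_le[of "delta k s" q'] q' less deltaC_s by simp
  ultimately show thesis using that s by blast
qed

lemma parent_eq_cyc: "is_parent k n U = (=) (cyc k s) \<Longrightarrow> parent k n U = cyc k s"
  by (simp add: parent_def)

lemma funpow_parent_reaches_root:
  assumes "U \<in> cycles k n" "0 < k" "0 < n"
  shows "\<exists>m. (parent k n ^^ m) U = root k n"
  using assms(1)
  \<comment> \<open>all Delta arrays have length n, so on them the lexicographic order agrees with lenlex\<close>
proof (induction U rule: wf_induct_rule[OF wf_inv_image[OF wf_lenlex[OF wf_less], of "deltaC k"]])
  case (1 U)
  show ?case
  proof (cases "U = root k n")
    case True
    then have "(parent k n ^^ 0) U = root k n" by simp
    then show ?thesis ..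
  next
    case False
    obtain s where s: "s \<in> strs k n" "is_parent k n U = (=) (cyc k s)"
      and less: "deltaC k (cyc k s) < deltaC k U"
      using parent_cycle[OF "1.prems" False assms(2,3)] by blast
    have s_cycle: "cyc k s \<in> cycles k n" using s(1) by (simp add: cycles_def)
    have "(deltaC k (cyc k s), deltaC k U) \<in> lexord {(a, b). a < b}"
      using less by (simp add: list_less_def)
    then have "(deltaC k (cyc k s), deltaC k U) \<in> lenlex {(a, b). a < b}"
      using length_deltaC[OF s_cycle assms(2,3)] length_deltaC[OF "1.prems" assms(2,3)]
      by (simp add: lenlex_conv lexord_lex)
    then obtain m where "(parent k n ^^ m) (cyc k s) = root k n"
      using "1.IH"[OF _ s_cycle] unfolding in_inv_image by blast
    then have "(parent k n ^^ Suc m) U = root k n"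
      using parent_eq_cyc[OF s(2)] by (simp add: funpow_Suc_right del: funpow.simps)
    then show ?thesis ..
  qed
qed

theorem lemma14:
  fixes k n :: nat
  assumes "k \<ge> 2" and "n \<ge> 1"
  shows "(\<forall>U \<in> cycles k n - {root k n}. \<exists>!V. is_parent k n U V)
       \<and> (\<forall>U \<in> cycles k n - {root k n}. G_arc k (parent k n U) U)
       \<and> (\<forall>U \<in> cycles k n. \<exists>m. (parent k n ^^ m) U = root k n)"
proof (intro conjI ballI)
  have pos: "0 < k" "0 < n" using assms by simp_all
  fix U assume "U \<in> cycles k n - {root k n}"
  then have "U \<in> cycles k n" "U \<noteq> root k n" by simp_all
  then obtain s where s: "icr k 0 s \<in> U" and parent_U: "is_parent k n U = (=) (cyc k s)"
    using parent_cycle pos by blast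
  show "\<exists>!V. is_parent k n U V" using parent_U by simp
  show "G_arc k (parent k n U) U"
    using s mem_cyc_self parent_eq_cyc[OF parent_U] by (auto simp: G_arc_def)
next
  fix U assume "U \<in> cycles k n"
  then show "\<exists>m. (parent k n ^^ m) U = root k n"
    using funpow_parent_reaches_root assms by simp
qed

end
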